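(* Let $d\ge1$, let $\mathbf{p}=(p_1,\dots,p_d)$ be a vector of nonzero real numbers and let $\boldsymbol\pi=(\pi_2,\dots,\pi_d)$ with each $\pi_i$ a permutation of $\{0,\dots,i-1\}$. Then every simplex $L\in\mathcal{T}_d(\mathbf{p},\boldsymbol\pi)$ satisfies $$\operatorname{meas}_d L=\prod_{i=1}^d|p_i|.$$
   Context: Construction of $\mathcal{T}_d(\mathbf{p},\boldsymbol\pi)$: inductively for $m=1,\dots,d$ define a collection $\mathcal{T}_m$ of $m$-simplices in $\mathbb{R}^m$ with a vertex coloring $c_m$ with colors in $\{0,\dots,m\}$. For $m=1$: vertices $A_z=zp_1$ ($z\in\mathbb{Z}$), simplices the segments between $zp_1$ and $(z+1)p_1$, $c_1(A_z)=z\bmod 2$. For $2\le m\le d$: put $c'=\pi_m\circ c_{m-1}$; for each $K\in\mathcal{T}_{m-1}$ label its vertices $A_0,\dots,A_{m-1}$ so that $c'(A_i)=i$, set $B^K_j=(A_{j\bmod m},jp_m)\in\mathbb{R}^m$ for $j\in\mathbb{Z}$, and $L^{K,z}=\operatorname{conv}\{B^K_z,\dots,B^K_{z+m}\}$ for $z\in\mathbb{Z}$; $\mathcal{T}_m=\{L^{K,z}\}$, with vertices $(A,jp_m)$ ($A$ a vertex of $\mathcal{T}_{m-1}$, $j\equiv c'(A)\pmod m$) colored $c_m((A,jp_m))=j\bmod(m+1)$. Then $\mathcal{T}_d(\mathbf{p},\boldsymbol\pi)=\mathcal{T}_d$. $\operatorname{meas}_d$ is $d$-dimensional Lebesgue measure.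 *)

theory Defs
  imports "HOL-Analysis.Analysis"
begin

text \<open>Points of R^m are represented as real lists of length m; a point (A, x) of
R^m = R^(m-1) x R is the list A @ [x].  Parameters: p :: nat => real gives p_1..p_d
(index i = p i); pm :: nat => nat => nat gives pi_2..pi_d (pm i = pi_i).\<close>

definition lconv :: "nat \<Rightarrow> real list list \<Rightarrow> real list set" where
  "lconv m vs = {map (\<lambda>k. \<Sum>i<length vs. t i * (vs ! i) ! k) [0..<m] | t.
                   (\<forall>i<length vs. 0 \<le> t i) \<and> (\<Sum>i<length vs. t i) = 1}"

definition meas :: "nat \<Rightarrow> real list set \<Rightarrow> real" where
  "meas d S = measure (PiM {..<d} (\<lambda>_. lborel)) ((\<lambda>xs. \<lambda>i\<in>{..<d}. xs ! i) ` S)"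

definition col :: "(nat \<Rightarrow> real) \<Rightarrow> nat \<Rightarrow> real list \<Rightarrow> nat" where
  "col p m v = nat ((THE j::int. v ! (m - 1) = of_int j * p m) mod (int m + 1))"

definition Avert :: "(nat \<Rightarrow> real) \<Rightarrow> (nat \<Rightarrow> nat \<Rightarrow> nat) \<Rightarrow> nat \<Rightarrow> real list list \<Rightarrow> nat \<Rightarrow> real list" where
  "Avert p pm m K i = (THE A. A \<in> set K \<and> pm m (col p (m - 1) A) = i)"

definition Bvert :: "(nat \<Rightarrow> real) \<Rightarrow> (nat \<Rightarrow> nat \<Rightarrow> nat) \<Rightarrow> nat \<Rightarrow> real list list \<Rightarrow> int \<Rightarrow> real list" where
  "Bvert p pm m K j = Avert p pm m K (nat (j mod int m)) @ [of_int j * p m]"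

fun Tv :: "(nat \<Rightarrow> real) \<Rightarrow> (nat \<Rightarrow> nat \<Rightarrow> nat) \<Rightarrow> nat \<Rightarrow> real list list set" where
  "Tv p pm 0 = {}"
| "Tv p pm (Suc 0) = {[[of_int z * p 1], [of_int (z + 1) * p 1]] | z::int. True}"
| "Tv p pm (Suc (Suc k)) =
     {map (\<lambda>i. Bvert p pm (Suc (Suc k)) K (z + int i)) [0..<Suc (Suc (Suc k))] | K z.
        K \<in> Tv p pm (Suc k)}"

definition Tri :: "(nat \<Rightarrow> real) \<Rightarrow> (nat \<Rightarrow> nat \<Rightarrow> nat) \<Rightarrow> nat \<Rightarrow> real list set set" where
  "Tri p pm d = lconv d ` Tv p pm d"

end

theory Submission
  imports Defs
begin

text \<open>A simplex of \<open>T_m\<close> lies over a simplex \<open>K\<close> of \<open>T_(m-1)\<close>: its vertices \<open>B_z, \<dots>, B_(z+m)\<close>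
  project onto the vertices of \<open>K\<close>, each once except \<open>A = A_(z mod m)\<close>, which carries both
  \<open>B_z\<close> and \<open>B_(z+m)\<close>, at heights differing by \<open>m p_m\<close>.  So the simplex is the region between
  the graph of an affine function over \<open>K\<close> and that graph raised by \<open>m p_m \<beta>_A\<close>, where \<open>\<beta>_A\<close> is
  the barycentric coordinate of \<open>A\<close>; by Cavalieri its volume is \<open>m \<bar>p_m\<bar>\<close> times the integral
  of \<open>\<beta>_A\<close> over \<open>K\<close>.  That integral is \<open>meas K / m\<close>, because the superlevel set \<open>{\<beta>_A \<ge> s}\<close> is
  \<open>K\<close> scaled by \<open>1 - s\<close> about \<open>A\<close>.  Each step thus multiplies the volume by \<open>\<bar>p_m\<bar>\<close>.\<close>

section \<open>Functions affine in the first coordinates\<close>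

abbreviation PiM_lborel :: "nat \<Rightarrow> (nat \<Rightarrow> real) measure" where
  "PiM_lborel n \<equiv> PiM {..<n} (\<lambda>_. lborel)"

definition affine_coords :: "nat \<Rightarrow> ((nat \<Rightarrow> real) \<Rightarrow> real) \<Rightarrow> bool" where
  "affine_coords n f \<longleftrightarrow> (\<exists>a b. \<forall>x. f x = a + (\<Sum>j<n. b j * x j))"

lemma affine_coords_cong:
  "affine_coords n f \<Longrightarrow> (\<And>j. j < n \<Longrightarrow> x j = y j) \<Longrightarrow> f x = f y"
  unfolding affine_coords_def by auto

lemma affine_coords_const: "affine_coords n (\<lambda>_. c)"
  unfolding affine_coords_def by (intro exI[of _ c] exI[of _ "\<lambda>_. 0"]) simp

lemma affine_coords_component: "j < n \<Longrightarrow> affine_coords n (\<lambda>x. x j)"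
  unfolding affine_coords_def
  by (intro exI[of _ 0] exI[of _ "\<lambda>i. if i = j then 1 else 0"])
    (auto simp: if_distrib[of "\<lambda>c. c * _"] cong: if_cong)

lemma affine_coords_add:
  assumes "affine_coords n f" "affine_coords n g"
  shows "affine_coords n (\<lambda>x. f x + g x)"
proof -
  obtain a b a' b' where "\<And>x. f x = a + (\<Sum>j<n. b j * x j)" "\<And>x. g x = a' + (\<Sum>j<n. b' j * x j)"
    using assms unfolding affine_coords_def by metis
  then show ?thesis
    unfolding affine_coords_def
    by (intro exI[of _ "a + a'"] exI[of _ "\<lambda>j. b j + b' j"]) (simp add: algebra_simps sum.distrib)
qed

lemma affine_coords_cmult:
  assumes "affine_coords n f"
  shows "affine_coords n (\<lambda>x. c * f x)"
proof -
  obtain a b where "\<And>x. f x = a + (\<Sum>j<n. b j * x j)"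
    using assms unfolding affine_coords_def by metis
  then show ?thesis
    unfolding affine_coords_def
    by (intro exI[of _ "c * a"] exI[of _ "\<lambda>j. c * b j"]) (simp add: algebra_simps sum_distrib_left)
qed

lemma affine_coords_diff:
  "affine_coords n f \<Longrightarrow> affine_coords n g \<Longrightarrow> affine_coords n (\<lambda>x. f x - g x)"
  using affine_coords_add[of n f "\<lambda>x. (-1) * g x"] affine_coords_cmult[of n g "-1"] by simp

lemma affine_coords_sum:
  "finite S \<Longrightarrow> (\<And>i. i \<in> S \<Longrightarrow> affine_coords n (f i)) \<Longrightarrow> affine_coords n (\<lambda>x. \<Sum>i\<in>S. f i x)"
  by (induction S rule: finite_induct) (auto intro: affine_coords_add affine_coords_const)

lemma affine_coords_mono:
  assumes "affine_coords n f" "n \<le> m"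
  shows "affine_coords m f"
proof -
  obtain a b where f: "\<And>x. f x = a + (\<Sum>j<n. b j * x j)"
    using assms(1) unfolding affine_coords_def by metis
  have "(\<Sum>j<m. (if j < n then b j else 0) * x j) = (\<Sum>j<n. b j * x j)" for x
    using assms(2) by (intro sum.mono_neutral_cong_right) auto
  then show ?thesis
    unfolding affine_coords_def by (intro exI[of _ a] exI[of _ "\<lambda>j. if j < n then b j else 0"]) (simp add: f)
qed

lemma affine_coords_convex_comb:
  assumes "affine_coords n f" "finite S" "(\<Sum>k\<in>S. t k) = 1"
    and "\<And>j. j < n \<Longrightarrow> x j = (\<Sum>k\<in>S. t k * V k j)"
  shows "f x = (\<Sum>k\<in>S. t k * f (V k))"
proof -
  obtain a b where f: "\<And>x. f x = a + (\<Sum>j<n. b j * x j)"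
    using assms(1) unfolding affine_coords_def by metis
  have "(\<Sum>k\<in>S. t k * f (V k)) = (\<Sum>k\<in>S. t k) * a + (\<Sum>k\<in>S. \<Sum>j<n. t k * (b j * V k j))"
    by (simp add: f algebra_simps sum.distrib sum_distrib_left sum_distrib_right)
  also have "\<dots> = a + (\<Sum>j<n. b j * (\<Sum>k\<in>S. t k * V k j))"
    by (subst sum.swap) (simp add: assms(3) sum_distrib_left mult.left_commute)
  also have "\<dots> = f x"
    by (simp add: f assms(4))
  finally show ?thesis ..
qed

lemma borel_measurable_affine_coords:
  assumes "affine_coords n f" "n \<le> m"
  shows "f \<in> borel_measurable (PiM_lborel m)"
proof -
  obtain a b where "f = (\<lambda>x. a + (\<Sum>j<n. b j * x j))"
    using assms(1) unfolding affine_coords_def by fast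
  then show ?thesis
    using assms(2) by (simp add: measurable_component_singleton)
qed

section \<open>Barycentric coordinates of simplices\<close>

text \<open>\<open>V k j\<close> is coordinate \<open>j\<close> of vertex \<open>k\<close>; the existence of barycentric coordinates \<open>\<beta>\<close>
  expresses that the simplex is nondegenerate.\<close>
definition barycentric ::
    "nat \<Rightarrow> (nat \<Rightarrow> nat \<Rightarrow> real) \<Rightarrow> (nat \<Rightarrow> (nat \<Rightarrow> real) \<Rightarrow> real) \<Rightarrow> bool" where
  "barycentric n V \<beta> \<longleftrightarrow> (\<forall>k\<le>n. affine_coords n (\<beta> k)) \<and> (\<forall>x. (\<Sum>k\<le>n. \<beta> k x) = 1)
     \<and> (\<forall>x j. j < n \<longrightarrow> (\<Sum>k\<le>n. \<beta> k x * V k j) = x j)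
     \<and> (\<forall>k\<le>n. \<forall>l\<le>n. \<beta> k (V l) = (if k = l then 1 else 0))"

definition simplex_of :: "nat \<Rightarrow> (nat \<Rightarrow> nat \<Rightarrow> real) \<Rightarrow> (nat \<Rightarrow> real) set" where
  "simplex_of n V = {restrict (\<lambda>j. \<Sum>k\<le>n. t k * V k j) {..<n} | t.
                    (\<forall>k\<le>n. 0 \<le> t k) \<and> (\<Sum>k\<le>n. t k) = 1}"

lemma barycentric_affine: "barycentric n V \<beta> \<Longrightarrow> k \<le> n \<Longrightarrow> affine_coords n (\<beta> k)"
  unfolding barycentric_def by blast

lemma barycentric_sum: "barycentric n V \<beta> \<Longrightarrow> (\<Sum>k\<le>n. \<beta> k x) = 1"
  unfolding barycentric_def by blast

lemma barycentric_vertex: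
  "barycentric n V \<beta> \<Longrightarrow> k \<le> n \<Longrightarrow> l \<le> n \<Longrightarrow> \<beta> k (V l) = (if k = l then 1 else 0)"
  unfolding barycentric_def by blast

lemma barycentric_convex_comb:
  assumes "barycentric n V \<beta>" "k \<le> n" "(\<Sum>l\<le>n. t l) = 1"
    and "\<And>j. j < n \<Longrightarrow> x j = (\<Sum>l\<le>n. t l * V l j)"
  shows "\<beta> k x = t k"
proof -
  have "\<beta> k x = (\<Sum>l\<le>n. t l * \<beta> k (V l))"
    by (rule affine_coords_convex_comb[OF barycentric_affine[OF assms(1,2)] finite_atMost assms(3,4)])
  also have "\<dots> = t k"
    using assms(2) by (simp add: barycentric_vertex[OF assms(1,2)] if_distrib cong: if_cong)
  finally show ?thesis .
qed

lemma barycentric_permute: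
  assumes "barycentric n V \<beta>" "bij_betw \<tau> {..n} {..n}"
  shows "barycentric n (\<lambda>k. V (\<tau> k)) (\<lambda>k. \<beta> (\<tau> k))"
proof -
  have \<tau>: "\<tau> k \<le> n" if "k \<le> n" for k
    using assms(2) that by (auto simp: bij_betw_def)
  have inj: "\<tau> k = \<tau> l \<longleftrightarrow> k = l" if "k \<le> n" "l \<le> n" for k l
    using assms(2) that by (auto simp: bij_betw_def inj_on_def)
  have reindex: "(\<Sum>k\<le>n. h (\<tau> k)) = (\<Sum>k\<le>n. h k)" for h :: "nat \<Rightarrow> real"
    by (rule sum.reindex_bij_betw[OF assms(2)])
  show ?thesis
    using assms(1) \<tau> inj unfolding barycentric_def
    by (simp add: reindex[of "\<lambda>k. \<beta> k _"] reindex[of "\<lambda>k. \<beta> k _ * V k _"])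
qed

lemma space_PiM_lborel: "space (PiM_lborel n) = PiE {..<n} (\<lambda>_. UNIV)"
  by (simp add: space_PiM)

lemma simplex_eq:
  assumes "barycentric n V \<beta>"
  shows "simplex_of n V = {x \<in> space (PiM_lborel n). \<forall>k\<le>n. 0 \<le> \<beta> k x}"
proof (intro equalityI subsetI)
  fix x assume "x \<in> simplex_of n V"
  then obtain t where t: "\<forall>k\<le>n. 0 \<le> t k" "(\<Sum>k\<le>n. t k) = 1"
    and x: "x = restrict (\<lambda>j. \<Sum>k\<le>n. t k * V k j) {..<n}"
    unfolding simplex_of_def by blast
  have "\<beta> k x = t k" if "k \<le> n" for k
    using assms that t(2) by (rule barycentric_convex_comb) (simp add: x)
  then show "x \<in> {x \<in> space (PiM_lborel n). \<forall>k\<le>n. 0 \<le> \<beta> k x}"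
    using t(1) by (simp add: x space_PiM_lborel)
next
  fix x assume x: "x \<in> {x \<in> space (PiM_lborel n). \<forall>k\<le>n. 0 \<le> \<beta> k x}"
  have "x = restrict (\<lambda>j. \<Sum>k\<le>n. \<beta> k x * V k j) {..<n}"
    using x assms by (auto simp: space_PiM_lborel PiE_def extensional_def barycentric_def)
  then show "x \<in> simplex_of n V"
    using x barycentric_sum[OF assms] unfolding simplex_of_def
    by (intro CollectI exI[of _ "\<lambda>k. \<beta> k x"]) simp
qed

lemma simplex_permute:
  assumes "barycentric n V \<beta>" "bij_betw \<tau> {..n} {..n}"
  shows "simplex_of n (\<lambda>k. V (\<tau> k)) = simplex_of n V"
proof -
  have "(\<forall>k\<le>n. 0 \<le> \<beta> (\<tau> k) x) \<longleftrightarrow> (\<forall>k\<le>n. 0 \<le> \<beta> k x)" for x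
    using assms(2) unfolding bij_betw_def by (metis atMost_iff image_eqI imageE)
  then show ?thesis
    unfolding simplex_eq[OF assms(1)] simplex_eq[OF barycentric_permute[OF assms]] by simp
qed

lemma borel_measurable_barycentric:
  "barycentric n V \<beta> \<Longrightarrow> k \<le> n \<Longrightarrow> \<beta> k \<in> borel_measurable (PiM_lborel n)"
  by (rule borel_measurable_affine_coords[OF barycentric_affine order_refl])

lemma sets_simplex:
  assumes "barycentric n V \<beta>"
  shows "simplex_of n V \<in> sets (PiM_lborel n)"
proof -
  note nonneg = borel_measurable_le[OF borel_measurable_const borel_measurable_barycentric[OF assms]]
  have "{x \<in> space (PiM_lborel n). \<forall>k\<in>{..n}. 0 \<le> \<beta> k x} \<in> sets (PiM_lborel n)"
    by (rule sets.sets_Collect_finite_All) (simp_all add: nonneg)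
  then show ?thesis
    by (simp only: simplex_eq[OF assms] Ball_def atMost_iff)
qed

section \<open>Scaling and the centroid property\<close>

interpretation lborel_product: product_sigma_finite "\<lambda>_::nat. lborel::real measure"
  by standard

lemma nn_integral_PiM_lborel_Suc:
  assumes "f \<in> borel_measurable (PiM_lborel (Suc n))"
  shows "(\<integral>\<^sup>+x. f x \<partial>PiM_lborel (Suc n)) = (\<integral>\<^sup>+x. (\<integral>\<^sup>+y. f (x(n := y)) \<partial>lborel) \<partial>PiM_lborel n)"
  using lborel_product.product_nn_integral_insert[of "{..<n}" n f] assms
  by (simp add: lessThan_Suc)

lemma nn_integral_lborel_affine:
  fixes c :: real
  assumes "0 < c" "f \<in> borel_measurable borel"
  shows "(\<integral>\<^sup>+y. f (a + c * y) \<partial>lborel) = ennreal (1 / c) * (\<integral>\<^sup>+y. f y \<partial>lborel)"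
proof -
  have "ennreal (1 / c) * (\<integral>\<^sup>+y. f y \<partial>lborel) = (ennreal (1 / c) * ennreal c) * (\<integral>\<^sup>+y. f (a + c * y) \<partial>lborel)"
    using nn_integral_real_affine[OF assms(2), of c a] assms(1) by (simp add: mult.assoc)
  also have "ennreal (1 / c) * ennreal c = 1"
    using assms(1) by (simp flip: ennreal_mult)
  finally show ?thesis by simp
qed

lemma nn_integral_PiM_lborel_affine:
  fixes f :: "(nat \<Rightarrow> real) \<Rightarrow> ennreal" and c :: real
  assumes "0 < c" "f \<in> borel_measurable (PiM_lborel n)"
  shows "(\<integral>\<^sup>+x. f (restrict (\<lambda>j. a j + c * x j) {..<n}) \<partial>PiM_lborel n)
    = ennreal (1 / c ^ n) * (\<integral>\<^sup>+x. f x \<partial>PiM_lborel n)"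
  using assms(2)
proof (induction n arbitrary: f)
  case 0
  then show ?case by (simp add: PiM_empty nn_integral_count_space_finite)
next
  case (Suc n)
  define R where "R x = restrict (\<lambda>j. a j + c * x j) {..<n}" for x
  define H where "H z = (\<integral>\<^sup>+y. f (z(n := y)) \<partial>lborel)" for z
  have R[measurable]: "R \<in> measurable (PiM_lborel n) (PiM_lborel n)"
    unfolding R_def by measurable
  have H[measurable]: "H \<in> borel_measurable (PiM_lborel n)"
    using Suc.prems unfolding H_def by (simp add: lessThan_Suc) measurable
  have inner: "(\<integral>\<^sup>+y. f ((R x)(n := a n + c * y)) \<partial>lborel) = ennreal (1 / c) * H (R x)"
    if "x \<in> space (PiM_lborel n)" for x
  proof -
    have "R x \<in> space (PiM_lborel n)"
      using R that by (rule measurable_space)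
    from measurable_comp[OF measurable_component_update[OF this, of n] Suc.prems[unfolded lessThan_Suc]]
    have "(\<lambda>y. f ((R x)(n := y))) \<in> borel_measurable borel"
      by (simp add: comp_def)
    then show ?thesis
      unfolding H_def by (rule nn_integral_lborel_affine[OF assms(1)])
  qed
  have "restrict (\<lambda>j. a j + c * (x(n := y)) j) {..<Suc n} = (R x)(n := a n + c * y)" for x y
    by (auto simp: R_def fun_eq_iff)
  moreover have "(\<lambda>x. f (restrict (\<lambda>j. a j + c * x j) {..<Suc n})) \<in> borel_measurable (PiM_lborel (Suc n))"
    using Suc.prems by measurable
  ultimately have "(\<integral>\<^sup>+x. f (restrict (\<lambda>j. a j + c * x j) {..<Suc n}) \<partial>PiM_lborel (Suc n))
      = (\<integral>\<^sup>+x. (\<integral>\<^sup>+y. f ((R x)(n := a n + c * y)) \<partial>lborel) \<partial>PiM_lborel n)"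
    by (simp add: nn_integral_PiM_lborel_Suc)
  also have "\<dots> = (\<integral>\<^sup>+x. ennreal (1 / c) * H (R x) \<partial>PiM_lborel n)"
    by (rule nn_integral_cong) (rule inner)
  also have "\<dots> = ennreal (1 / c) * (\<integral>\<^sup>+x. H (R x) \<partial>PiM_lborel n)"
    by (rule nn_integral_cmult) measurable
  also have "(\<integral>\<^sup>+x. H (R x) \<partial>PiM_lborel n) = ennreal (1 / c ^ n) * (\<integral>\<^sup>+x. H x \<partial>PiM_lborel n)"
    unfolding R_def by (rule Suc.IH[OF H])
  also have "(\<integral>\<^sup>+x. H x \<partial>PiM_lborel n) = (\<integral>\<^sup>+x. f x \<partial>PiM_lborel (Suc n))"
    unfolding H_def by (rule nn_integral_PiM_lborel_Suc[OF Suc.prems, symmetric])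
  finally have "(\<integral>\<^sup>+x. f (restrict (\<lambda>j. a j + c * x j) {..<Suc n}) \<partial>PiM_lborel (Suc n))
      = (ennreal (1 / c) * ennreal (1 / c ^ n)) * (\<integral>\<^sup>+x. f x \<partial>PiM_lborel (Suc n))"
    by (simp only: mult.assoc)
  also have "ennreal (1 / c) * ennreal (1 / c ^ n) = ennreal (1 / c ^ Suc n)"
    using assms(1) by (simp flip: ennreal_mult)
  finally show ?case .
qed

lemma barycentric_homothety:
  assumes "barycentric n V \<beta>" "i \<le> n" "k \<le> n"
  shows "\<beta> k (restrict (\<lambda>j. (1 - c) * V i j + c * x j) {..<n})
    = c * \<beta> k x + (1 - c) * (if k = i then 1 else 0)"
proof -
  have "\<beta> k (restrict (\<lambda>j. (1 - c) * V i j + c * x j) {..<n})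
      = (\<Sum>l\<in>{0::nat, 1}. (if l = 0 then c else 1 - c) * \<beta> k (if l = 0 then x else V i))"
    by (rule affine_coords_convex_comb[OF barycentric_affine[OF assms(1,3)]]) (auto simp: algebra_simps)
  then show ?thesis
    by (simp add: barycentric_vertex[OF assms(1,3,2)])
qed

lemma homothety_mem_simplex_iff:
  assumes "barycentric n V \<beta>" "i \<le> n" "0 \<le> s" "s < 1" "x \<in> space (PiM_lborel n)"
  defines "c \<equiv> 1 / (1 - s)"
  shows "restrict (\<lambda>j. (1 - c) * V i j + c * x j) {..<n} \<in> simplex_of n V
    \<longleftrightarrow> x \<in> simplex_of n V \<and> s \<le> \<beta> i x"
proof -
  let ?y = "restrict (\<lambda>j. (1 - c) * V i j + c * x j) {..<n}"
  have c: "0 < c" "(1 - s) * c = 1"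
    using assms(4) unfolding c_def by auto
  have "0 \<le> \<beta> k ?y \<longleftrightarrow> (if k = i then s \<le> \<beta> i x else 0 \<le> \<beta> k x)" if "k \<le> n" for k
  proof (cases "k = i")
    case True
    have "(1 - s) * (c * \<beta> i x + (1 - c)) = \<beta> i x - s"
      using c(2) by algebra
    moreover have "0 \<le> c * \<beta> i x + (1 - c) \<longleftrightarrow> 0 \<le> (1 - s) * (c * \<beta> i x + (1 - c))"
      using assms(4) by (simp add: zero_le_mult_iff)
    ultimately have "0 \<le> c * \<beta> i x + (1 - c) \<longleftrightarrow> s \<le> \<beta> i x"
      by simp
    then show ?thesis
      using True barycentric_homothety[OF assms(1,2) that] by simp
  next
    case False
    then show ?thesis
      using c(1) barycentric_homothety[OF assms(1,2) that] by (simp add: zero_le_mult_iff)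
  qed
  then have "(\<forall>k\<le>n. 0 \<le> \<beta> k ?y) \<longleftrightarrow> (\<forall>k\<le>n. 0 \<le> \<beta> k x) \<and> s \<le> \<beta> i x"
    using assms(2,3) by (metis order.trans)
  then show ?thesis
    using assms(5) unfolding simplex_eq[OF assms(1)] by (simp add: space_PiM_lborel)
qed

lemma emeasure_simplex_superlevel:
  assumes "barycentric n V \<beta>" "i \<le> n" "0 \<le> s" "s < 1"
    and "emeasure (PiM_lborel n) (simplex_of n V) = ennreal v" "0 \<le> v"
  shows "emeasure (PiM_lborel n) {x \<in> space (PiM_lborel n). x \<in> simplex_of n V \<and> s \<le> \<beta> i x}
    = ennreal ((1 - s) ^ n * v)"
proof -
  define c where "c = 1 / (1 - s)"
  let ?K = "simplex_of n V"
  let ?E = "{x \<in> space (PiM_lborel n). x \<in> ?K \<and> s \<le> \<beta> i x}"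
  have [measurable]: "?K \<in> sets (PiM_lborel n)"
    by (rule sets_simplex[OF assms(1)])
  have [measurable]: "\<beta> i \<in> borel_measurable (PiM_lborel n)"
    by (rule borel_measurable_barycentric[OF assms(1,2)])
  have "emeasure (PiM_lborel n) ?E = (\<integral>\<^sup>+x. indicator ?E x \<partial>PiM_lborel n)"
    by simp
  also have "\<dots> = (\<integral>\<^sup>+x. indicator ?K (restrict (\<lambda>j. (1 - c) * V i j + c * x j) {..<n}) \<partial>PiM_lborel n)"
    using homothety_mem_simplex_iff[OF assms(1-4)]
    by (intro nn_integral_cong) (simp add: indicator_def c_def)
  also have "\<dots> = ennreal (1 / c ^ n) * (\<integral>\<^sup>+x. indicator ?K x \<partial>PiM_lborel n)"
    using assms(4) unfolding c_def by (intro nn_integral_PiM_lborel_affine) auto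
  also have "\<dots> = ennreal ((1 - s) ^ n * v)"
    using assms(4-6) by (simp add: c_def power_divide ennreal_mult)
  finally show ?thesis .
qed

lemma nn_integral_power_01:
  fixes v :: real
  assumes "0 \<le> v"
  shows "(\<integral>\<^sup>+s. ennreal (indicator {0..1} s * ((1 - s) ^ n * v)) \<partial>lborel) = ennreal (v / (n + 1))"
proof -
  have "((\<lambda>s. (1 - s) ^ n * v) has_integral
      (- ((1 - 1) ^ (n + 1) * v / (n + 1))) - (- ((1 - 0) ^ (n + 1) * v / (n + 1)))) {0..1::real}"
  proof (rule fundamental_theorem_of_calculus)
    fix x :: real
    show "((\<lambda>s. - ((1 - s) ^ (n + 1) * v / (n + 1))) has_vector_derivative (1 - x) ^ n * v) (at x within {0..1})"
      unfolding has_real_derivative_iff_has_vector_derivative[symmetric]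
      by (rule derivative_eq_intros refl | simp)+
  qed simp
  then have "((\<lambda>s. if s \<in> {0..1} then (1 - s) ^ n * v else 0) has_integral v / (n + 1)) UNIV"
    by (simp only: has_integral_restrict_UNIV) simp
  moreover have "(\<lambda>s. indicator {0..1} s * ((1 - s) ^ n * v)) = (\<lambda>s. if s \<in> {0..1} then (1 - s) ^ n * v else 0)"
    by (auto simp: indicator_def)
  ultimately have "((\<lambda>s. indicator {0..1} s * ((1 - s) ^ n * v)) has_integral v / (n + 1)) UNIV"
    by simp
  then show ?thesis
    using assms by (intro nn_integral_has_integral_lborel) (auto simp: indicator_def)
qed

lemma barycentric_le_1:
  assumes "barycentric n V \<beta>" "x \<in> simplex_of n V" "i \<le> n"
  shows "\<beta> i x \<le> 1"
proof -
  have "\<beta> i x \<le> (\<Sum>k\<le>n. \<beta> k x)"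
    using assms(2,3) unfolding simplex_eq[OF assms(1)] by (intro member_le_sum) auto
  then show ?thesis
    by (simp add: barycentric_sum[OF assms(1)])
qed

lemma nn_integral_simplex_superlevel:
  assumes "barycentric n V \<beta>" "i \<le> n" "s \<noteq> 1"
    and "emeasure (PiM_lborel n) (simplex_of n V) = ennreal v" "0 \<le> v"
  shows "(\<integral>\<^sup>+x. (if x \<in> simplex_of n V \<and> 0 \<le> s \<and> s \<le> \<beta> i x then 1 else 0) \<partial>PiM_lborel n)
    = ennreal (indicator {0..1} s * ((1 - s) ^ n * v))"
proof -
  consider "s < 0" | "0 \<le> s" "s < 1" | "1 < s"
    using assms(3) by linarith
  then show ?thesis
  proof cases
    case 2
    let ?E = "{x \<in> space (PiM_lborel n). x \<in> simplex_of n V \<and> s \<le> \<beta> i x}"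
    have [measurable]: "simplex_of n V \<in> sets (PiM_lborel n)"
      by (rule sets_simplex[OF assms(1)])
    have [measurable]: "\<beta> i \<in> borel_measurable (PiM_lborel n)"
      by (rule borel_measurable_barycentric[OF assms(1,2)])
    have "(\<integral>\<^sup>+x. (if x \<in> simplex_of n V \<and> 0 \<le> s \<and> s \<le> \<beta> i x then 1 else 0) \<partial>PiM_lborel n)
        = (\<integral>\<^sup>+x. indicator ?E x \<partial>PiM_lborel n)"
      using 2 by (intro nn_integral_cong) (simp add: indicator_def)
    also have "\<dots> = ennreal ((1 - s) ^ n * v)"
      using emeasure_simplex_superlevel[OF assms(1,2) 2 assms(4,5)] by simp
    finally show ?thesis
      using 2 by simp
  next
    case 3
    have "(if x \<in> simplex_of n V \<and> 0 \<le> s \<and> s \<le> \<beta> i x then 1 else 0) = (0::ennreal)" for x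
      using 3 barycentric_le_1[OF assms(1) _ assms(2), of x] by auto
    then show ?thesis
      using 3 by simp
  qed simp
qed

text \<open>By Fubini the integral is that of \<open>s \<mapsto> meas {\<beta> i \<ge> s}\<close>, and \<open>{\<beta> i \<ge> s}\<close> is the simplex
  scaled by \<open>1 - s\<close> about the vertex \<open>V i\<close>.\<close>
lemma nn_integral_barycentric_coord:
  assumes "barycentric n V \<beta>" "i \<le> n"
    and "emeasure (PiM_lborel n) (simplex_of n V) = ennreal v" "0 \<le> v"
  shows "(\<integral>\<^sup>+x. indicator (simplex_of n V) x * ennreal (\<beta> i x) \<partial>PiM_lborel n) = ennreal (v / (n + 1))"
proof -
  let ?K = "simplex_of n V"
  define F where "F x s = (if x \<in> ?K \<and> 0 \<le> s \<and> s \<le> \<beta> i x then 1 else 0 :: ennreal)" for x s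
  have [measurable]: "?K \<in> sets (PiM_lborel n)"
    by (rule sets_simplex[OF assms(1)])
  have [measurable]: "\<beta> i \<in> borel_measurable (PiM_lborel n)"
    by (rule borel_measurable_barycentric[OF assms(1,2)])
  have F: "case_prod F \<in> borel_measurable (PiM_lborel n \<Otimes>\<^sub>M lborel)"
    unfolding F_def by measurable
  interpret pair_sigma_finite "PiM_lborel n" lborel
    unfolding pair_sigma_finite_def using lborel_product.sigma_finite sigma_finite_lborel by simp
  have "indicator ?K x * ennreal (\<beta> i x) = (\<integral>\<^sup>+s. F x s \<partial>lborel)" for x
  proof (cases "x \<in> ?K")
    case True
    then have "0 \<le> \<beta> i x"
      using assms(2) unfolding simplex_eq[OF assms(1)] by blast
    moreover have "(\<integral>\<^sup>+s. F x s \<partial>lborel) = (\<integral>\<^sup>+s. indicator {0..\<beta> i x} s \<partial>lborel)"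
      unfolding F_def using True by (intro nn_integral_cong) (simp add: indicator_def)
    ultimately show ?thesis
      using True by simp
  qed (simp add: F_def)
  then have "(\<integral>\<^sup>+x. indicator ?K x * ennreal (\<beta> i x) \<partial>PiM_lborel n)
      = (\<integral>\<^sup>+s. (\<integral>\<^sup>+x. F x s \<partial>PiM_lborel n) \<partial>lborel)"
    using Fubini'[OF F] by simp
  also have "\<dots> = (\<integral>\<^sup>+s. ennreal (indicator {0..1} s * ((1 - s) ^ n * v)) \<partial>lborel)"
    using AE_lborel_singleton[of 1] nn_integral_simplex_superlevel[OF assms(1,2) _ assms(3,4)]
    by (intro nn_integral_cong_AE) (auto simp: F_def elim!: AE_mp)
  also have "\<dots> = ennreal (v / (n + 1))"
    by (rule nn_integral_power_01[OF assms(4)])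
  finally show ?thesis .
qed

section \<open>Lifting a simplex by one dimension\<close>

lemma emeasure_lborel_scaled_interval:
  fixes a b c :: real
  assumes "c \<noteq> 0" "0 \<le> b"
  shows "{t. 0 \<le> (t - a) / c \<and> (t - a) / c \<le> b} \<in> sets lborel"
    and "emeasure lborel {t. 0 \<le> (t - a) / c \<and> (t - a) / c \<le> b} = ennreal (\<bar>c\<bar> * b)"
proof -
  have "{t. 0 \<le> (t - a) / c \<and> (t - a) / c \<le> b} = (if 0 < c then {a..a + c * b} else {a + c * b..a})"
    using assms(1) by (cases "0 < c") (auto simp: zero_le_divide_iff divide_le_eq algebra_simps)
  then show "{t. 0 \<le> (t - a) / c \<and> (t - a) / c \<le> b} \<in> sets lborel"
    and "emeasure lborel {t. 0 \<le> (t - a) / c \<and> (t - a) / c \<le> b} = ennreal (\<bar>c\<bar> * b)"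
    using assms by (auto simp: abs_if mult_nonpos_nonneg)
qed

text \<open>\<open>W\<close> lists the vertices of an \<open>(n + 1)\<close>-simplex lying over the vertices of \<open>V\<close>, where
  \<open>V 0\<close> carries the two vertices \<open>W 0\<close> and \<open>W (Suc n)\<close>, whose heights differ by \<open>c\<close>.\<close>
locale simplex_lift =
  fixes n :: nat and V :: "nat \<Rightarrow> nat \<Rightarrow> real" and \<beta> :: "nat \<Rightarrow> (nat \<Rightarrow> real) \<Rightarrow> real"
    and W :: "nat \<Rightarrow> nat \<Rightarrow> real" and c :: real
  assumes barycentric: "barycentric n V \<beta>"
    and W_lower: "\<And>l j. l \<le> n \<Longrightarrow> j < n \<Longrightarrow> W l j = V l j"
    and W_top: "\<And>j. j < n \<Longrightarrow> W (Suc n) j = V 0 j"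
    and height: "W (Suc n) n - W 0 n = c"
    and height_nonzero: "c \<noteq> 0"
begin

text \<open>The lifted simplex is the region between the graphs of \<open>bottom\<close> and \<open>bottom + c \<beta> 0\<close>
  over the base simplex, and \<open>level\<close> is the fraction of the way up.\<close>
definition bottom :: "(nat \<Rightarrow> real) \<Rightarrow> real" where
  "bottom x = (\<Sum>l\<le>n. W l n * \<beta> l x)"

definition level :: "(nat \<Rightarrow> real) \<Rightarrow> real" where
  "level x = (x n - bottom x) / c"

definition \<gamma> :: "nat \<Rightarrow> (nat \<Rightarrow> real) \<Rightarrow> real" where
  "\<gamma> l x = (if l = Suc n then level x else if l = 0 then \<beta> 0 x - level x else \<beta> l x)"

lemma affine_coords_\<beta>: "k \<le> n \<Longrightarrow> affine_coords (Suc n) (\<beta> k)"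
  using affine_coords_mono barycentric_affine[OF barycentric] by (meson le_SucI order_refl)

lemma affine_coords_level: "affine_coords (Suc n) level"
proof -
  have "affine_coords (Suc n) (\<lambda>x. (1 / c) * (x n - (\<Sum>l\<le>n. W l n * \<beta> l x)))"
    by (intro affine_coords_cmult affine_coords_diff affine_coords_component affine_coords_sum
        affine_coords_\<beta>) auto
  then show ?thesis
    unfolding level_def bottom_def by simp
qed

lemma affine_coords_\<gamma>:
  assumes "l \<le> Suc n"
  shows "affine_coords (Suc n) (\<gamma> l)"
proof -
  consider "l = Suc n" | "l = 0" | "l \<noteq> 0" "l \<le> n"
    using assms by linarith
  then show ?thesis
    by cases
      (simp_all add: \<gamma>_def[abs_def] affine_coords_level affine_coords_diff affine_coords_\<beta>)
qed

lemma sum_\<gamma>: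
  "(\<Sum>l\<le>Suc n. \<gamma> l x * w l) = level x * (w (Suc n) - w 0) + (\<Sum>l\<le>n. \<beta> l x * w l)"
proof -
  have "(\<Sum>l\<le>n. \<gamma> l x * w l) = (\<Sum>l\<le>n. \<beta> l x * w l - (if l = 0 then level x * w 0 else 0))"
    by (rule sum.cong) (auto simp: \<gamma>_def algebra_simps)
  then show ?thesis
    by (simp add: \<gamma>_def sum_subtractf algebra_simps)
qed

lemma \<beta>_W:
  assumes "k \<le> n" "l \<le> Suc n"
  shows "\<beta> k (W l) = (if k = (if l = Suc n then 0 else l) then 1 else 0)"
proof -
  have "\<beta> k (W l) = \<beta> k (V (if l = Suc n then 0 else l))"
    using assms(2)
    by (intro affine_coords_cong[OF barycentric_affine[OF barycentric assms(1)]])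
      (auto simp: W_lower W_top)
  then show ?thesis
    using assms by (simp add: barycentric_vertex[OF barycentric])
qed

lemma level_W: "l \<le> Suc n \<Longrightarrow> level (W l) = (if l = Suc n then 1 else 0)"
  using height height_nonzero
  by (auto simp: level_def bottom_def \<beta>_W if_distrib[of "\<lambda>b. _ * b"] cong: if_cong)

lemma \<gamma>_W:
  assumes "k \<le> Suc n" "l \<le> Suc n"
  shows "\<gamma> k (W l) = (if k = l then 1 else 0)"
  using assms by (auto simp: \<gamma>_def level_W \<beta>_W)

lemma barycentric_lift: "barycentric (Suc n) W \<gamma>"
  unfolding barycentric_def
proof (intro conjI allI impI)
  show "affine_coords (Suc n) (\<gamma> k)" if "k \<le> Suc n" for k
    using that by (rule affine_coords_\<gamma>)
  show "(\<Sum>k\<le>Suc n. \<gamma> k x) = 1" for x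
    using sum_\<gamma>[of x "\<lambda>_. 1"] barycentric_sum[OF barycentric] by simp
  show "\<gamma> k (W l) = (if k = l then 1 else 0)" if "k \<le> Suc n" "l \<le> Suc n" for k l
    using that by (rule \<gamma>_W)
  fix x j
  assume "j < Suc n"
  then consider "j < n" | "j = n"
    by linarith
  then show "(\<Sum>k\<le>Suc n. \<gamma> k x * W k j) = x j"
  proof cases
    case 1
    have "(\<Sum>k\<le>Suc n. \<gamma> k x * W k j) = level x * (W (Suc n) j - W 0 j) + (\<Sum>k\<le>n. \<beta> k x * W k j)"
      by (rule sum_\<gamma>)
    also have "\<dots> = (\<Sum>k\<le>n. \<beta> k x * V k j)"
      using 1 by (simp add: W_lower W_top)
    also have "\<dots> = x j"
      using barycentric 1 unfolding barycentric_def by blast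
    finally show ?thesis .
  next
    case 2
    have "(\<Sum>k\<le>Suc n. \<gamma> k x * W k j) = level x * (W (Suc n) n - W 0 n) + (\<Sum>k\<le>n. \<beta> k x * W k n)"
      unfolding 2 by (rule sum_\<gamma>)
    also have "\<dots> = x j"
      using 2 height_nonzero by (simp add: height level_def bottom_def mult.commute)
    finally show ?thesis .
  qed
qed

lemma lift_mem_simplex_iff:
  assumes "x \<in> space (PiM_lborel n)"
  shows "x(n := t) \<in> simplex_of (Suc n) W \<longleftrightarrow>
    x \<in> simplex_of n V \<and> 0 \<le> (t - bottom x) / c \<and> (t - bottom x) / c \<le> \<beta> 0 x"
proof -
  let ?u = "(t - bottom x) / c"
  have \<beta>: "\<beta> k (x(n := t)) = \<beta> k x" if "k \<le> n" for k
    using barycentric_affine[OF barycentric that] by (rule affine_coords_cong) simp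
  then have "level (x(n := t)) = ?u"
    by (simp add: level_def bottom_def)
  then have \<gamma>: "\<gamma> (Suc n) (x(n := t)) = ?u" "\<gamma> 0 (x(n := t)) = \<beta> 0 x - ?u"
    "\<And>l. l \<in> {1..n} \<Longrightarrow> \<gamma> l (x(n := t)) = \<beta> l x"
    by (simp_all add: \<gamma>_def \<beta>)
  have "{..Suc n} = insert (Suc n) (insert 0 {1..n})" "{..n} = insert 0 {1..n}"
    by auto
  then have "(\<forall>l\<in>{..Suc n}. 0 \<le> \<gamma> l (x(n := t)))
      \<longleftrightarrow> (\<forall>k\<in>{..n}. 0 \<le> \<beta> k x) \<and> 0 \<le> ?u \<and> ?u \<le> \<beta> 0 x"
    by (auto simp: \<gamma>)
  moreover have "x(n := t) \<in> space (PiM_lborel (Suc n))"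
    using assms by (auto simp: space_PiM_lborel PiE_def extensional_def)
  ultimately show ?thesis
    using assms unfolding simplex_eq[OF barycentric_lift] simplex_eq[OF barycentric]
    by (simp add: Ball_def)
qed

lemma nn_integral_lift_fiber:
  assumes "x \<in> space (PiM_lborel n)"
  shows "(\<integral>\<^sup>+t. indicator (simplex_of (Suc n) W) (x(n := t)) \<partial>lborel)
    = ennreal \<bar>c\<bar> * (indicator (simplex_of n V) x * ennreal (\<beta> 0 x))"
proof (cases "x \<in> simplex_of n V")
  case True
  then have nonneg: "0 \<le> \<beta> 0 x"
    unfolding simplex_eq[OF barycentric] by auto
  let ?S = "{t. 0 \<le> (t - bottom x) / c \<and> (t - bottom x) / c \<le> \<beta> 0 x}"
  have "(\<integral>\<^sup>+t. indicator (simplex_of (Suc n) W) (x(n := t)) \<partial>lborel) = (\<integral>\<^sup>+t. indicator ?S t \<partial>lborel)"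
    by (rule nn_integral_cong) (simp add: indicator_def lift_mem_simplex_iff[OF assms] True)
  also have "\<dots> = ennreal (\<bar>c\<bar> * \<beta> 0 x)"
    using emeasure_lborel_scaled_interval[OF height_nonzero nonneg] by simp
  finally show ?thesis
    using True nonneg by (simp add: ennreal_mult)
qed (simp add: indicator_def lift_mem_simplex_iff[OF assms])

lemma emeasure_simplex_lift:
  assumes "emeasure (PiM_lborel n) (simplex_of n V) = ennreal v" "0 \<le> v"
  shows "emeasure (PiM_lborel (Suc n)) (simplex_of (Suc n) W) = ennreal (\<bar>c\<bar> * v / (n + 1))"
proof -
  let ?K = "simplex_of n V" and ?L = "simplex_of (Suc n) W"
  have [measurable]: "?K \<in> sets (PiM_lborel n)" "?L \<in> sets (PiM_lborel (Suc n))"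
    by (rule sets_simplex[OF barycentric], rule sets_simplex[OF barycentric_lift])
  have [measurable]: "\<beta> 0 \<in> borel_measurable (PiM_lborel n)"
    by (rule borel_measurable_barycentric[OF barycentric]) simp
  have "emeasure (PiM_lborel (Suc n)) ?L = (\<integral>\<^sup>+y. indicator ?L y \<partial>PiM_lborel (Suc n))"
    by simp
  also have "\<dots> = (\<integral>\<^sup>+x. (\<integral>\<^sup>+t. indicator ?L (x(n := t)) \<partial>lborel) \<partial>PiM_lborel n)"
    by (rule nn_integral_PiM_lborel_Suc) measurable
  also have "\<dots> = (\<integral>\<^sup>+x. ennreal \<bar>c\<bar> * (indicator ?K x * ennreal (\<beta> 0 x)) \<partial>PiM_lborel n)"
    by (rule nn_integral_cong) (rule nn_integral_lift_fiber)
  also have "\<dots> = ennreal \<bar>c\<bar> * (\<integral>\<^sup>+x. indicator ?K x * ennreal (\<beta> 0 x) \<partial>PiM_lborel n)"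
    by (rule nn_integral_cmult) measurable
  also have "\<dots> = ennreal \<bar>c\<bar> * ennreal (v / (n + 1))"
    by (simp only: nn_integral_barycentric_coord[OF barycentric _ assms])
  also have "\<dots> = ennreal (\<bar>c\<bar> * v / (n + 1))"
    using assms(2) by (simp flip: ennreal_mult)
  finally show ?thesis .
qed

end

section \<open>The simplices of the triangulation\<close>

lemma col_eq:
  assumes "p m \<noteq> 0" "v ! (m - 1) = of_int j * p m"
  shows "col p m v = nat (j mod (int m + 1))"
proof -
  have "(THE j'. v ! (m - 1) = of_int j' * p m) = j"
    using assms by (intro the_equality) auto
  then show ?thesis
    unfolding col_def by simp
qed

lemma bij_betw_shift_mod:
  assumes "0 < m"
  shows "bij_betw (\<lambda>l. nat ((z + int l) mod int m)) {..<m} {..<m}"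
proof -
  let ?f = "\<lambda>l. nat ((z + int l) mod int m)"
  have "inj_on ?f {..<m}"
  proof (rule inj_onI)
    fix l l'
    assume "l \<in> {..<m}" "l' \<in> {..<m}" "?f l = ?f l'"
    then have "(z + int l) mod int m = (z + int l') mod int m"
      using assms by (simp add: eq_nat_nat_iff)
    then have "int l mod int m = int l' mod int m"
      by (metis add_diff_cancel_left' mod_diff_left_eq)
    then show "l = l'"
      using \<open>l \<in> {..<m}\<close> \<open>l' \<in> {..<m}\<close> by simp
  qed
  moreover have "?f ` {..<m} \<subseteq> {..<m}"
    using assms by (auto simp: nat_less_iff)
  ultimately show ?thesis
    unfolding bij_betw_def using endo_inj_surj[of "{..<m}" ?f] by simp
qed

lemma Avert_permutes:
  assumes p: "p m \<noteq> 0" and pm: "bij_betw (pm (Suc m)) {..<Suc m} {..<Suc m}"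
    and len: "length K = Suc m"
    and heights: "\<And>l. l < Suc m \<Longrightarrow> K ! l ! (m - 1) = of_int (z + int l) * p m"
  obtains \<rho> where "bij_betw \<rho> {..<Suc m} {..<Suc m}"
    and "\<And>i. i < Suc m \<Longrightarrow> Avert p pm (Suc m) K i = K ! \<rho> i"
proof -
  define \<sigma> where "\<sigma> l = pm (Suc m) (nat ((z + int l) mod int (Suc m)))" for l
  have \<sigma>: "bij_betw \<sigma> {..<Suc m} {..<Suc m}"
    unfolding \<sigma>_def[abs_def] using bij_betw_trans[OF bij_betw_shift_mod pm]
    by (simp add: comp_def)
  have col: "pm (Suc m) (col p m (K ! l)) = \<sigma> l" if "l < Suc m" for l
    using col_eq[of p m, OF p heights[OF that]] by (simp add: \<sigma>_def add.commute)
  define \<rho> where "\<rho> = inv_into {..<Suc m} \<sigma>"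
  have \<rho>: "bij_betw \<rho> {..<Suc m} {..<Suc m}"
    unfolding \<rho>_def by (rule bij_betw_inv_into[OF \<sigma>])
  have "Avert p pm (Suc m) K i = K ! \<rho> i" if i: "i < Suc m" for i
    unfolding Avert_def
  proof (rule the_equality)
    have "\<rho> i < Suc m" "\<sigma> (\<rho> i) = i"
      using \<rho> i bij_betw_inv_into_right[OF \<sigma>] unfolding \<rho>_def bij_betw_def by auto
    then show "K ! \<rho> i \<in> set K \<and> pm (Suc m) (col p (Suc m - 1) (K ! \<rho> i)) = i"
      using len col by simp
  next
    fix A
    assume A: "A \<in> set K \<and> pm (Suc m) (col p (Suc m - 1) A) = i"
    then obtain l where l: "l < Suc m" "A = K ! l"
      using len by (auto simp: in_set_conv_nth)
    then have "\<rho> i = l"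
      using A col \<sigma> unfolding \<rho>_def bij_betw_def by auto
    then show "A = K ! \<rho> i"
      using l by simp
  qed
  then show thesis
    using that \<rho> by blast
qed

lemma Bvert_lift:
  assumes p: "p m \<noteq> 0" and pm: "bij_betw (pm (Suc m)) {..<Suc m} {..<Suc m}"
    and len: "length K = Suc m"
    and heights: "\<And>l. l < Suc m \<Longrightarrow> K ! l ! (m - 1) = of_int (z + int l) * p m"
  obtains \<tau> where "bij_betw \<tau> {..m} {..m}" and "\<tau> (Suc m) = \<tau> 0"
    and "\<And>l. Bvert p pm (Suc m) K (z' + int l) = K ! \<tau> l @ [of_int (z' + int l) * p (Suc m)]"
proof -
  obtain \<rho> where \<rho>: "bij_betw \<rho> {..<Suc m} {..<Suc m}"
    and A: "\<And>i. i < Suc m \<Longrightarrow> Avert p pm (Suc m) K i = K ! \<rho> i"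
    using Avert_permutes[of p m pm K z, OF assms] by blast
  define \<tau> where "\<tau> l = \<rho> (nat ((z' + int l) mod int (Suc m)))" for l
  have "bij_betw \<tau> {..<Suc m} {..<Suc m}"
    unfolding \<tau>_def[abs_def] using bij_betw_trans[OF bij_betw_shift_mod \<rho>]
    by (simp add: comp_def)
  moreover have "\<tau> (Suc m) = \<tau> 0"
    unfolding \<tau>_def by simp
  moreover have "Bvert p pm (Suc m) K (z' + int l) = K ! \<tau> l @ [of_int (z' + int l) * p (Suc m)]" for l
    unfolding Bvert_def \<tau>_def by (subst A) (simp_all add: nat_less_iff)
  ultimately show thesis
    using that by (simp add: lessThan_Suc_atMost)
qed

text \<open>The heights \<open>(z + l) p n\<close> are part of the invariant because they determine the colours
  \<open>c_n\<close>, and hence the vertex order \<open>A_0, \<dots>, A_n\<close> used in the next step.\<close>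
definition Tv_invariant :: "(nat \<Rightarrow> real) \<Rightarrow> nat \<Rightarrow> real list list \<Rightarrow> bool" where
  "Tv_invariant p n vs \<longleftrightarrow> length vs = Suc n \<and> (\<forall>l\<le>n. length (vs ! l) = n)
    \<and> (\<exists>z::int. \<forall>l\<le>n. vs ! l ! (n - 1) = of_int (z + int l) * p n)
    \<and> (\<exists>\<gamma>. barycentric n (\<lambda>k j. vs ! k ! j) \<gamma>)
    \<and> emeasure (PiM_lborel n) (simplex_of n (\<lambda>k j. vs ! k ! j)) = ennreal (\<Prod>i=1..n. \<bar>p i\<bar>)"

lemma emeasure_simplex_of_0: "emeasure (PiM_lborel 0) (simplex_of 0 V) = 1"
proof -
  have "simplex_of 0 V = {\<lambda>_. undefined}"
    unfolding simplex_of_def by (auto simp: fun_eq_iff intro!: exI[of _ "\<lambda>_. 1"])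
  then show ?thesis
    by simp
qed

text \<open>The segments of \<open>T_1\<close> are lifts of the one-point simplex in \<open>\<real>\<^sup>0\<close>.\<close>
lemma Tv_invariant_1:
  assumes "p 1 \<noteq> 0"
  shows "Tv_invariant p 1 [[of_int z * p 1], [of_int (z + 1) * p 1]]"
proof -
  let ?vs = "[[of_int z * p 1], [of_int (z + 1) * p 1]]"
  have "barycentric 0 (\<lambda>_ _. 0) (\<lambda>_ _. 1)"
    unfolding barycentric_def by (simp add: affine_coords_const)
  then interpret simplex_lift 0 "\<lambda>_ _. 0" "\<lambda>_ _. 1" "\<lambda>k j. ?vs ! k ! j" "p 1"
    using assms by unfold_locales (simp_all add: algebra_simps)
  have "\<forall>l\<le>1. length (?vs ! l) = 1 \<and> ?vs ! l ! 0 = of_int (z + int l) * p 1"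
    by (simp add: le_Suc_eq)
  then show ?thesis
    using barycentric_lift emeasure_simplex_lift[of 1] emeasure_simplex_of_0
    unfolding Tv_invariant_def by auto
qed

lemma simplex_lift_append:
  assumes bary: "barycentric m (\<lambda>k j. K ! k ! j) \<beta>"
    and \<tau>: "bij_betw \<tau> {..m} {..m}" "\<tau> (Suc m) = \<tau> 0"
    and len: "\<And>l. l \<le> Suc m \<Longrightarrow> length (K ! \<tau> l) = m"
    and W: "\<And>l. l \<le> Suc m \<Longrightarrow> W ! l = K ! \<tau> l @ [h l]"
    and "h (Suc m) - h 0 = c" "c \<noteq> 0"
  shows "simplex_lift m (\<lambda>k j. K ! \<tau> k ! j) (\<lambda>k. \<beta> (\<tau> k)) (\<lambda>k j. W ! k ! j) c"
proof
  show "barycentric m (\<lambda>k j. K ! \<tau> k ! j) (\<lambda>k. \<beta> (\<tau> k))"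
    using barycentric_permute[OF bary \<tau>(1)] .
  show "W ! l ! j = K ! \<tau> l ! j" if "l \<le> m" "j < m" for l j
    using that len[of l] by (simp add: W nth_append)
  show "W ! Suc m ! j = K ! \<tau> 0 ! j" if "j < m" for j
    using that len[of "Suc m"] by (simp add: W nth_append \<tau>(2))
  show "W ! Suc m ! m - W ! 0 ! m = c"
    using len[of 0] len[of "Suc m"] assms(6) by (simp add: W nth_append)
qed (rule assms(7))

lemma Tv_invariant_Suc:
  assumes K: "Tv_invariant p m K" and p: "p m \<noteq> 0" "p (Suc m) \<noteq> 0"
    and pm: "bij_betw (pm (Suc m)) {..<Suc m} {..<Suc m}"
  shows "Tv_invariant p (Suc m) (map (\<lambda>i. Bvert p pm (Suc m) K (z + int i)) [0..<Suc (Suc m)])"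
    (is "Tv_invariant p (Suc m) ?vs")
proof -
  obtain z' \<beta> where len: "length K = Suc m" and len': "\<forall>l\<le>m. length (K ! l) = m"
    and heights: "\<forall>l\<le>m. K ! l ! (m - 1) = of_int (z' + int l) * p m"
    and bary: "barycentric m (\<lambda>k j. K ! k ! j) \<beta>"
    and vol: "emeasure (PiM_lborel m) (simplex_of m (\<lambda>k j. K ! k ! j)) = ennreal (\<Prod>i=1..m. \<bar>p i\<bar>)"
    using K unfolding Tv_invariant_def by blast
  obtain \<tau> where \<tau>: "bij_betw \<tau> {..m} {..m}" "\<tau> (Suc m) = \<tau> 0"
    and B: "\<And>l. Bvert p pm (Suc m) K (z + int l) = K ! \<tau> l @ [of_int (z + int l) * p (Suc m)]"
    using Bvert_lift[of p m pm K z' z, OF p(1) pm len] heights by (auto simp: less_Suc_eq_le)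
  have len_\<tau>: "length (K ! \<tau> l) = m" if "l \<le> Suc m" for l
    using len' \<tau> that bij_betwE[OF \<tau>(1)] by (cases "l = Suc m") auto
  have vs: "?vs ! l = K ! \<tau> l @ [of_int (z + int l) * p (Suc m)]" if "l \<le> Suc m" for l
    using that by (simp add: B nth_append del: upt_Suc)
  interpret simplex_lift m "\<lambda>k j. K ! \<tau> k ! j" "\<lambda>k. \<beta> (\<tau> k)" "\<lambda>k j. ?vs ! k ! j"
    "of_nat (Suc m) * p (Suc m)"
  proof (rule simplex_lift_append[OF bary \<tau> len_\<tau> vs])
    show "of_int (z + int (Suc m)) * p (Suc m) - of_int (z + int 0) * p (Suc m) = of_nat (Suc m) * p (Suc m)"
      by (simp add: algebra_simps)
    show "of_nat (Suc m) * p (Suc m) \<noteq> 0"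
      using p(2) by (simp del: of_nat_Suc)
  qed
  have "simplex_of m (\<lambda>k j. K ! \<tau> k ! j) = simplex_of m (\<lambda>k j. K ! k ! j)"
    using simplex_permute[OF bary \<tau>(1)] .
  then have "emeasure (PiM_lborel (Suc m)) (simplex_of (Suc m) (\<lambda>k j. ?vs ! k ! j))
      = ennreal (\<bar>of_nat (Suc m) * p (Suc m)\<bar> * (\<Prod>i=1..m. \<bar>p i\<bar>) / (m + 1))"
    using vol by (intro emeasure_simplex_lift) (simp_all add: prod_nonneg)
  also have "\<dots> = ennreal (\<Prod>i=1..Suc m. \<bar>p i\<bar>)"
    by (simp add: abs_mult prod.nat_ivl_Suc' mult.commute)
  finally have "emeasure (PiM_lborel (Suc m)) (simplex_of (Suc m) (\<lambda>k j. ?vs ! k ! j))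
      = ennreal (\<Prod>i=1..Suc m. \<bar>p i\<bar>)" .
  moreover have "\<forall>l\<le>Suc m. length (?vs ! l) = Suc m"
    using len_\<tau> vs by (simp del: upt_Suc)
  moreover have "\<forall>l\<le>Suc m. ?vs ! l ! (Suc m - 1) = of_int (z + int l) * p (Suc m)"
    using len_\<tau> vs by (simp add: nth_append del: upt_Suc)
  ultimately show ?thesis
    using barycentric_lift unfolding Tv_invariant_def by (intro conjI) (simp, blast+)
qed

lemma Tv_invariant_Tv:
  assumes p: "\<forall>i\<in>{1..d}. p i \<noteq> 0" and pm: "\<forall>i\<in>{2..d}. bij_betw (pm i) {..<i} {..<i}"
    and "1 \<le> n" "n \<le> d" "vs \<in> Tv p pm n"
  shows "Tv_invariant p n vs"
  using assms(3-5)
proof (induction n arbitrary: vs rule: nat_induct_at_least)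
  case base
  then show ?case
    using p Tv_invariant_1 by auto
next
  case (Suc m)
  then obtain k where "m = Suc k"
    using not0_implies_Suc by fastforce
  then obtain K z where K: "K \<in> Tv p pm m"
    and vs: "vs = map (\<lambda>i. Bvert p pm (Suc m) K (z + int i)) [0..<Suc (Suc m)]"
    using Suc.prems by auto
  show ?case
    unfolding vs using Suc K p pm by (intro Tv_invariant_Suc) auto
qed

lemma lconv_image_eq_simplex_of:
  assumes "length vs = Suc d"
  shows "(\<lambda>xs. \<lambda>i\<in>{..<d}. xs ! i) ` lconv d vs = simplex_of d (\<lambda>k j. vs ! k ! j)"
proof -
  have coords: "(\<lambda>i\<in>{..<d}. map (\<lambda>k. \<Sum>i<length vs. t i * vs ! i ! k) [0..<d] ! i)
      = restrict (\<lambda>j. \<Sum>k\<le>d. t k * vs ! k ! j) {..<d}" for t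
    using assms by (auto simp: fun_eq_iff lessThan_Suc_atMost)
  have weights: "(\<forall>i<length vs. 0 \<le> t i) \<and> (\<Sum>i<length vs. t i) = 1
      \<longleftrightarrow> (\<forall>k\<le>d. 0 \<le> t k) \<and> (\<Sum>k\<le>d. t k) = 1" for t :: "nat \<Rightarrow> real"
    using assms by (simp add: lessThan_Suc_atMost less_Suc_eq_le)
  show ?thesis
    unfolding lconv_def simplex_of_def image_Collect[symmetric] image_image coords weights ..
qed

theorem proposition1:
  fixes d :: nat and p :: "nat \<Rightarrow> real" and pm :: "nat \<Rightarrow> nat \<Rightarrow> nat" and L :: "real list set"
  assumes "d \<ge> 1"
    and "\<forall>i\<in>{1..d}. p i \<noteq> 0"
    and "\<forall>i\<in>{2..d}. bij_betw (pm i) {..<i} {..<i}"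
    and "L \<in> Tri p pm d"
  shows "meas d L = (\<Prod>i=1..d. \<bar>p i\<bar>)"
proof -
  obtain vs where vs: "vs \<in> Tv p pm d" and L: "L = lconv d vs"
    using assms(4) unfolding Tri_def by blast
  have "Tv_invariant p d vs"
    using Tv_invariant_Tv[OF assms(2,3,1) order_refl vs] .
  then have "length vs = Suc d"
    and vol: "emeasure (PiM_lborel d) (simplex_of d (\<lambda>k j. vs ! k ! j)) = ennreal (\<Prod>i=1..d. \<bar>p i\<bar>)"
    unfolding Tv_invariant_def by blast+
  then have "meas d L = measure (PiM_lborel d) (simplex_of d (\<lambda>k j. vs ! k ! j))"
    unfolding meas_def L by (simp only: lconv_image_eq_simplex_of)
  also have "\<dots> = (\<Prod>i=1..d. \<bar>p i\<bar>)"
    unfolding measure_def vol by (simp add: prod_nonneg)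
  finally show ?thesis .
qed

end
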